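(* There exist constants $c,C>0$ such that for all $x\in\Omega$, $$c\,\delta(x)^s|\log\delta(x)| \le \varphi_\delta(x)\le C\,\delta(x)^s\bigl(1+|\log\delta(x)|\bigr).$$
   Context: Setting: $n\ge 2$, $s\in(0,1)$, $\Omega\subset\mathbb R^n$ bounded domain with $C^2$ boundary, $\delta(x)=\operatorname{dist}(x,\mathbb R^n\setminus\Omega)$. Let $\mathbb G_s$ be the Green function of the restricted fractional Laplacian $(-\Delta)^s$ (defined by $c_{n,s}\,\mathrm{P.V.}\int_{\mathbb R^n}\frac{u(x)-u(y)}{|x-y|^{n+2s}}dy$) in $\Omega$ with zero exterior condition; it satisfies the two-sided estimate $\mathbb G_s(x,y)\asymp |x-y|^{2s-n}\bigl(\frac{\delta(x)}{|x-y|}\wedge1\bigr)^s\bigl(\frac{\delta(y)}{|x-y|}\wedge1\bigr)^s$. Define $\varphi_\delta(x)=\int_\Omega \mathbb G_s(x,y)\,\delta(y)^{-s}\,dy$, i.e. the solution of $(-\Delta)^s\varphi_\delta=\delta^{-s}$ in $\Omega$, $\varphi_\delta=0$ in $\mathbb R^n\setminus\Omega$. *)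

theory Defs
  imports "HOL-Analysis.Analysis"
begin

definition bdist :: "(real^'n) set \<Rightarrow> real^'n \<Rightarrow> real" where
  "bdist \<Omega> x = infdist x (- \<Omega>)"

definition C2_on :: "(real^'n) set \<Rightarrow> (real^'n \<Rightarrow> real) \<Rightarrow> bool" where
  "C2_on U f \<longleftrightarrow> (\<exists>D H. (\<forall>x\<in>U. (f has_derivative (\<lambda>h. D x \<bullet> h)) (at x))
      \<and> (\<forall>x\<in>U. (D has_derivative (\<lambda>h. H x *v h)) (at x))
      \<and> continuous_on U H)"

definition C2_boundary :: "(real^'n) set \<Rightarrow> bool" where
  "C2_boundary \<Omega> \<longleftrightarrow> (\<forall>p\<in>frontier \<Omega>. \<exists>U \<rho> D. open U \<and> p \<in> U \<and> C2_on U \<rho>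
      \<and> (\<forall>x\<in>U. (\<rho> has_derivative (\<lambda>h. D x \<bullet> h)) (at x) \<and> D x \<noteq> 0)
      \<and> \<Omega> \<inter> U = {x\<in>U. \<rho> x < 0})"

definition frac_const :: "nat \<Rightarrow> real \<Rightarrow> real" where
  "frac_const n s = s * 4 powr s * Gamma (real n / 2 + s) / (pi powr (real n / 2) * Gamma (1 - s))"

definition frac_lap_at :: "real \<Rightarrow> (real^'n \<Rightarrow> real) \<Rightarrow> real^'n \<Rightarrow> real \<Rightarrow> bool" where
  "frac_lap_at s u x L \<longleftrightarrow>
     (\<forall>e>0. integrable lborel
        (\<lambda>y. indicator {y. e < dist x y} y * (u x - u y) / dist x y powr (real CARD('n) + 2 * s)))
   \<and> ((\<lambda>e. frac_const CARD('n) s * (LINT y|lborel.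
        indicator {y. e < dist x y} y * (u x - u y) / dist x y powr (real CARD('n) + 2 * s)))
        \<longlongrightarrow> L) (at_right 0)"

definition frac_green :: "real \<Rightarrow> (real^'n) set \<Rightarrow> (real^'n \<Rightarrow> real^'n \<Rightarrow> real) \<Rightarrow> bool" where
  "frac_green s \<Omega> G \<longleftrightarrow>
     (\<forall>x\<in>\<Omega>. G x \<in> borel_measurable lborel) \<and>
     (\<forall>f. C2_on UNIV f \<and> compact (closure {y. f y \<noteq> 0}) \<and> closure {y. f y \<noteq> 0} \<subseteq> \<Omega> \<longrightarrow>
        (\<forall>x\<in>\<Omega>. frac_lap_at s (\<lambda>z. if z \<in> \<Omega> then (LINT y:\<Omega>|lborel. G z y * f y) else 0) x (f x)))"

definition phi_delta :: "real \<Rightarrow> (real^'n) set \<Rightarrow> (real^'n \<Rightarrow> real^'n \<Rightarrow> real) \<Rightarrow> real^'n \<Rightarrow> real" where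
  "phi_delta s \<Omega> G x = (LINT y:\<Omega>|lborel. G x y * bdist \<Omega> y powr (- s))"

end

theory Submission
  imports Defs
begin

text \<open>
  Inserting the two-sided Green estimate and \<open>\<delta>(y) \<le> \<delta>(x) + |x - y|\<close>, the integrand of
  \<open>\<phi>\<^sub>\<delta>(x)\<close> lies between a multiple of \<open>\<delta>(x)^s max(|x - y|, \<delta>(x))^(-n)\<close> and a multiple of
  \<open>min(|x - y|^(s-n), \<delta>(x)^s |x - y|^(-n))\<close>.
  Summing the upper kernel over the dyadic shells \<open>|x - y| \<approx> 2^(-k) diam \<Omega>\<close> gives
  \<open>\<delta>(x)^s\<close> times the number of shells above scale \<open>\<delta>(x)\<close>, i.e. \<open>O(\<delta>(x)^s (1 + |log \<delta>(x)|))\<close>.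
  For the lower bound, the \<open>C\<^sup>2\<close> boundary provides a uniform interior cone at every point close
  to \<open>\<partial>\<Omega>\<close>; it contains \<open>\<approx> |log \<delta>(x)|\<close> disjoint balls at dyadic distances from \<open>x\<close>, each
  contributing \<open>\<approx> \<delta>(x)^s\<close>. Away from the boundary the ball \<open>B(x, \<delta>(x))\<close> alone contributes
  \<open>\<approx> \<delta>(x)^s\<close>, which dominates \<open>\<delta>(x)^s |log \<delta>(x)|\<close> there.
\<close>

lemma bdist_pos:
  fixes \<Omega> :: "(real^'n) set"
  assumes "open \<Omega>" "bounded \<Omega>" "x \<in> \<Omega>"
  shows "0 < bdist \<Omega> x"
proof -
  have "- \<Omega> \<noteq> {}"
  proof
    assume "- \<Omega> = {}"
    then have "\<Omega> = UNIV" by auto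
    with assms(2) show False by simp
  qed
  then show ?thesis
    unfolding bdist_def using assms by (intro infdist_pos_not_in_closed) auto
qed

lemma ball_bdist_subset: "ball x (bdist \<Omega> x) \<subseteq> \<Omega>"
proof
  fix y assume "y \<in> ball x (bdist \<Omega> x)"
  then show "y \<in> \<Omega>"
    unfolding bdist_def using infdist_le[of y "- \<Omega>" x] by (cases "y \<in> \<Omega>") auto
qed

lemma bdist_le_bdist_add_dist: "bdist \<Omega> y \<le> bdist \<Omega> x + dist x y"
  unfolding bdist_def using infdist_triangle[of y "- \<Omega>" x] by (simp add: dist_commute)

lemma bounded_bdist_diameter_bound:
  fixes \<Omega> :: "(real^'n) set"
  assumes "bounded \<Omega>"
  obtains R where "0 < R" "\<And>x y. x \<in> \<Omega> \<Longrightarrow> y \<in> \<Omega> \<Longrightarrow> dist x y < R"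
    "\<And>x. x \<in> \<Omega> \<Longrightarrow> bdist \<Omega> x \<le> R"
proof -
  obtain r where r: "0 < r" "\<Omega> \<subseteq> ball 0 r"
    using bounded_subset_ballD[OF assms] by blast
  have "dist x y < 2 * r" if "x \<in> \<Omega>" "y \<in> \<Omega>" for x y :: "real^'n"
  proof -
    have "dist x 0 < r" "dist 0 y < r" using r that by (auto simp: dist_commute)
    then show ?thesis using dist_triangle[of x y 0] by linarith
  qed
  moreover have "bdist \<Omega> x \<le> 2 * r" if "x \<in> \<Omega>" for x
  proof -
    have "ball x (bdist \<Omega> x) \<subseteq> ball 0 r"
      using ball_bdist_subset r by blast
    then show ?thesis
      using r by (auto simp: ball_subset_ball_iff) (smt (verit) norm_ge_zero)
  qed
  ultimately show ?thesis
    using that r by (metis mult_pos_pos zero_less_numeral)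
qed

lemma compact_subset_bdist_ge:
  fixes \<Omega> :: "(real^'n) set"
  assumes "open \<Omega>" "bounded \<Omega>" "compact K" "K \<subseteq> \<Omega>"
  obtains d0 where "0 < d0" "\<And>x. x \<in> K \<Longrightarrow> d0 \<le> bdist \<Omega> x"
proof (cases "K = {}")
  case True
  then show ?thesis using that[of 1] by auto
next
  case False
  have "continuous_on K (bdist \<Omega>)"
    unfolding bdist_def by (intro continuous_intros)
  then obtain k where "k \<in> K" "\<forall>y\<in>K. bdist \<Omega> k \<le> bdist \<Omega> y"
    using continuous_attains_inf[OF assms(3) False] by blast
  then show ?thesis
    using that[of "bdist \<Omega> k"] bdist_pos[OF assms(1,2)] assms(4) by auto
qed

lemma dist_cone_ball:
  fixes x y \<nu> :: "real^'n"
  assumes "norm \<nu> = 1" "0 < \<sigma>" "y \<in> ball (x - \<sigma> *\<^sub>R \<nu>) (\<sigma>/8)"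
  shows "7*\<sigma>/8 < dist x y" "dist x y < 9*\<sigma>/8"
proof -
  have "dist x (x - \<sigma> *\<^sub>R \<nu>) = \<sigma>" using assms by (simp add: dist_norm)
  then show "7*\<sigma>/8 < dist x y" "dist x y < 9*\<sigma>/8"
    using assms(3) dist_triangle[of x y "x - \<sigma> *\<^sub>R \<nu>"] dist_triangle[of x "x - \<sigma> *\<^sub>R \<nu>" y]
    by (auto simp: dist_commute)
qed

lemma gradient_close_cone_decreasing:
  fixes \<rho> :: "real^'n \<Rightarrow> real" and D :: "real^'n \<Rightarrow> real^'n"
  assumes deriv: "\<And>z. z \<in> ball p (2*l) \<Longrightarrow> (\<rho> has_derivative (\<lambda>h. D z \<bullet> h)) (at z)"
    and close: "\<And>z. z \<in> ball p (2*l) \<Longrightarrow> norm (D z - a *\<^sub>R \<nu>) < a/4"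
    and \<nu>: "norm \<nu> = 1" and a: "0 < a"
    and x: "x \<in> ball p l" and \<tau>: "0 < \<tau>" "\<tau> \<le> l/2"
    and y: "y \<in> ball (x - \<tau> *\<^sub>R \<nu>) (\<tau>/8)"
  shows "y \<in> ball p (2*l)" "\<rho> y < \<rho> x"
proof -
  define v where "v = y - x"
  define w where "w = v + \<tau> *\<^sub>R \<nu>"
  have nw: "norm w < \<tau>/8"
    using y by (simp add: w_def v_def dist_norm norm_minus_commute algebra_simps)
  have nv: "norm v < 9*\<tau>/8"
    using dist_cone_ball(2)[OF \<nu> \<tau>(1) y] by (simp add: v_def dist_norm norm_minus_commute)
  have seg: "x + u *\<^sub>R v \<in> ball p (2*l)" if "0 \<le> u" "u \<le> 1" for u
  proof -
    have "norm (u *\<^sub>R v) \<le> norm v" using that by (simp add: mult_left_le_one_le)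
    then have "dist x (x + u *\<^sub>R v) \<le> norm v" by (simp add: dist_norm)
    then show ?thesis
      using x nv \<tau> dist_triangle[of p "x + u *\<^sub>R v" x] by simp
  qed
  then show "y \<in> ball p (2*l)"
    using seg[of 1] by (simp add: v_def)
  have "D z \<bullet> v < 0" if "z \<in> ball p (2*l)" for z
  proof -
    have "D z \<bullet> v = - (a * \<tau>) + a * (\<nu> \<bullet> w) + (D z - a *\<^sub>R \<nu>) \<bullet> v"
      using \<nu> by (simp add: w_def inner_diff_left inner_add_right algebra_simps norm_eq_1)
    moreover have "a * (\<nu> \<bullet> w) \<le> (a * \<tau>) / 8"
      using mult_left_mono[of "\<nu> \<bullet> w" "\<tau>/8" a] Cauchy_Schwarz_ineq2[of \<nu> w] \<nu> nw a by auto
    moreover have "(D z - a *\<^sub>R \<nu>) \<bullet> v \<le> 9 * (a * \<tau>) / 32"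
    proof -
      have "(D z - a *\<^sub>R \<nu>) \<bullet> v \<le> norm (D z - a *\<^sub>R \<nu>) * norm v"
        using Cauchy_Schwarz_ineq2 abs_le_D1 by blast
      also have "\<dots> \<le> (a/4) * (9*\<tau>/8)"
        using close[OF that] nv a by (intro mult_mono) auto
      finally show ?thesis by simp
    qed
    ultimately show ?thesis
      using mult_pos_pos[OF a \<tau>(1)] by linarith
  qed
  moreover have "((\<lambda>u. \<rho> (x + u *\<^sub>R v)) has_real_derivative D (x + u *\<^sub>R v) \<bullet> v) (at u)"
    if "0 \<le> u" "u \<le> 1" for u
  proof -
    have "((\<lambda>u. x + u *\<^sub>R v) has_derivative (\<lambda>h. h *\<^sub>R v)) (at u)"
      by (auto intro!: derivative_eq_intros)
    from has_derivative_compose[OF this deriv[OF seg[OF that]]]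
    show ?thesis
      unfolding has_field_derivative_def by (simp add: mult.commute[of _ "D _ \<bullet> v"])
  qed
  ultimately have "\<rho> (x + 1 *\<^sub>R v) < \<rho> (x + 0 *\<^sub>R v)"
    using seg by (intro DERIV_neg_imp_decreasing[of 0 1]) auto
  then show "\<rho> y < \<rho> x"
    by (simp add: v_def)
qed

lemma C2_boundary_local_cone:
  fixes \<Omega> :: "(real^'n) set"
  assumes "C2_boundary \<Omega>" "p \<in> frontier \<Omega>"
  obtains l \<nu> where "0 < l" "norm \<nu> = 1"
    "\<And>x \<tau>. x \<in> \<Omega> \<inter> ball p l \<Longrightarrow> 0 < \<tau> \<Longrightarrow> \<tau> \<le> l/2 \<Longrightarrow> ball (x - \<tau> *\<^sub>R \<nu>) (\<tau>/8) \<subseteq> \<Omega>"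
proof -
  have "\<exists>U \<rho> D. open U \<and> p \<in> U \<and> C2_on U \<rho>
      \<and> (\<forall>x\<in>U. (\<rho> has_derivative (\<lambda>h. D x \<bullet> h)) (at x) \<and> D x \<noteq> 0)
      \<and> \<Omega> \<inter> U = {x\<in>U. \<rho> x < 0}"
    using assms unfolding C2_boundary_def by (rule bspec)
  then obtain U \<rho> D where U: "open U" "p \<in> U" "C2_on U \<rho>"
    and D: "\<forall>x\<in>U. (\<rho> has_derivative (\<lambda>h. D x \<bullet> h)) (at x) \<and> D x \<noteq> 0"
    and \<Omega>U: "\<Omega> \<inter> U = {x\<in>U. \<rho> x < 0}"
    by (elim exE conjE)
  obtain D' H where D': "\<forall>x\<in>U. (\<rho> has_derivative (\<lambda>h. D' x \<bullet> h)) (at x)"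
    and H: "\<forall>x\<in>U. (D' has_derivative (\<lambda>h. H x *v h)) (at x)"
    using U(3) unfolding C2_on_def by (elim exE conjE)
  have "(\<lambda>h. D p \<bullet> h) = (\<lambda>h. D' p \<bullet> h)"
    using has_derivative_unique D D' U(2) by blast
  then have "D p \<bullet> (D p - D' p) = D' p \<bullet> (D p - D' p)" by metis
  then have "(D p - D' p) \<bullet> (D p - D' p) = 0" by (simp add: inner_diff_left)
  then have "D' p \<noteq> 0" using D U(2) by auto
  define a where "a = norm (D' p)"
  define \<nu> where "\<nu> = (1/a) *\<^sub>R D' p"
  have a: "0 < a" using \<open>D' p \<noteq> 0\<close> by (simp add: a_def)
  have \<nu>: "norm \<nu> = 1" and "a *\<^sub>R \<nu> = D' p"
    using a by (simp_all add: \<nu>_def a_def)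
  have "continuous (at p) D'"
    using H U(2) has_derivative_continuous by blast
  then obtain e where e: "0 < e" "\<And>z. dist z p < e \<Longrightarrow> dist (D' z) (D' p) < a/4"
    unfolding continuous_at_eps_delta using a by (metis zero_less_divide_iff zero_less_numeral)
  obtain e' where e': "0 < e'" "ball p e' \<subseteq> U"
    using U openE by blast
  define l where "l = min e e' / 2"
  have l: "0 < l" "ball p (2*l) \<subseteq> U"
    using e e' by (auto simp: l_def)
  have close: "norm (D' z - a *\<^sub>R \<nu>) < a/4" if "z \<in> ball p (2*l)" for z
  proof -
    have "dist z p < e" using that by (simp add: l_def dist_commute)
    then show ?thesis using e(2) \<open>a *\<^sub>R \<nu> = D' p\<close> by (simp add: dist_norm)
  qed
  show ?thesis
  proof (rule that[OF l(1) \<nu>], rule subsetI)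
    fix x \<tau> y assume x: "x \<in> \<Omega> \<inter> ball p l" and \<tau>: "0 < \<tau>" "\<tau> \<le> l/2"
      and y: "y \<in> ball (x - \<tau> *\<^sub>R \<nu>) (\<tau>/8)"
    have "x \<in> \<Omega> \<inter> U" using x l by auto
    then have "\<rho> x < 0" unfolding \<Omega>U by simp
    moreover have "y \<in> ball p (2*l)" "\<rho> y < \<rho> x"
      using gradient_close_cone_decreasing[of p l \<rho> D' a \<nu> x \<tau> y] D' l(2) close \<nu> a x \<tau> y
      by blast+
    ultimately have "y \<in> \<Omega> \<inter> U" unfolding \<Omega>U using l(2) by auto
    then show "y \<in> \<Omega>" by blast
  qed
qed

lemma C2_boundary_uniform_cone:
  fixes \<Omega> :: "(real^'n) set"
  assumes "open \<Omega>" "bounded \<Omega>" "C2_boundary \<Omega>"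
  obtains d0 \<tau>0 where "0 < d0" "0 < \<tau>0" "\<And>x. x \<in> \<Omega> \<Longrightarrow> bdist \<Omega> x < d0 \<Longrightarrow>
     \<exists>\<nu>. norm \<nu> = 1 \<and> (\<forall>\<tau>. 0 < \<tau> \<and> \<tau> \<le> \<tau>0 \<longrightarrow> ball (x - \<tau> *\<^sub>R \<nu>) (\<tau>/8) \<subseteq> \<Omega>)"
proof -
  define cone where "cone p l \<nu> \<longleftrightarrow> 0 < l \<and> norm \<nu> = 1 \<and>
    (\<forall>x\<in>\<Omega> \<inter> ball p l. \<forall>\<tau>. 0 < \<tau> \<and> \<tau> \<le> l/2 \<longrightarrow> ball (x - \<tau> *\<^sub>R \<nu>) (\<tau>/8) \<subseteq> \<Omega>)" for p l \<nu>
  have "\<forall>p\<in>frontier \<Omega>. \<exists>l \<nu>. cone p l \<nu>"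
  proof
    fix p assume "p \<in> frontier \<Omega>"
    then obtain l \<nu> where "0 < l" "norm \<nu> = 1"
      "\<And>x \<tau>. x \<in> \<Omega> \<inter> ball p l \<Longrightarrow> 0 < \<tau> \<Longrightarrow> \<tau> \<le> l/2 \<Longrightarrow> ball (x - \<tau> *\<^sub>R \<nu>) (\<tau>/8) \<subseteq> \<Omega>"
      using C2_boundary_local_cone[OF assms(3)] by blast
    then show "\<exists>l \<nu>. cone p l \<nu>" unfolding cone_def by blast
  qed
  then obtain L where "\<forall>p\<in>frontier \<Omega>. \<exists>\<nu>. cone p (L p) \<nu>" by metis
  then obtain N where LN: "\<forall>p\<in>frontier \<Omega>. cone p (L p) (N p)" by (metis bchoice)
  obtain P where P: "P \<subseteq> frontier \<Omega>" "finite P" "frontier \<Omega> \<subseteq> (\<Union>p\<in>P. ball p (L p))"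
  proof (rule compactE_image[OF compact_frontier_bounded[OF assms(2)]])
    show "frontier \<Omega> \<subseteq> (\<Union>p\<in>frontier \<Omega>. ball p (L p))"
    proof
      fix p assume "p \<in> frontier \<Omega>"
      then have "0 < L p" using LN unfolding cone_def by blast
      then show "p \<in> (\<Union>p\<in>frontier \<Omega>. ball p (L p))" using \<open>p \<in> frontier \<Omega>\<close> by force
    qed
  qed auto
  define \<tau>0 where "\<tau>0 = (if P = {} then 1 else Min (L ` P)) / 2"
  have "\<And>p. p \<in> P \<Longrightarrow> 0 < L p" using LN P(1) unfolding cone_def by blast
  then have \<tau>0: "0 < \<tau>0" "\<And>p. p \<in> P \<Longrightarrow> \<tau>0 \<le> L p / 2"
    using P(2) unfolding \<tau>0_def by (auto simp: Min_gr_iff)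
  define V where "V = (\<Union>p\<in>P. ball p (L p))"
  have "compact (closure \<Omega> - V)"
    using assms(2) unfolding V_def
    by (intro compact_diff) (auto simp: compact_closure)
  moreover have "closure \<Omega> - V \<subseteq> \<Omega>"
    using P(3) closure_Un_frontier[of \<Omega>] unfolding V_def by blast
  ultimately obtain d0 where d0: "0 < d0" "\<And>x. x \<in> closure \<Omega> - V \<Longrightarrow> d0 \<le> bdist \<Omega> x"
    using compact_subset_bdist_ge[OF assms(1,2)] by blast
  show ?thesis
  proof (rule that[OF d0(1) \<tau>0(1)])
    fix x assume x: "x \<in> \<Omega>" "bdist \<Omega> x < d0"
    then have "x \<notin> closure \<Omega> - V" using d0(2) by force
    then have "x \<in> V" using x(1) closure_subset by blast
    then obtain p where p: "p \<in> P" "x \<in> ball p (L p)" unfolding V_def by blast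
    have "cone p (L p) (N p)" using LN P(1) p(1) by blast
    then have \<nu>: "norm (N p) = 1" and
      cone_p: "\<And>\<tau>. 0 < \<tau> \<Longrightarrow> \<tau> \<le> L p / 2 \<Longrightarrow> ball (x - \<tau> *\<^sub>R N p) (\<tau>/8) \<subseteq> \<Omega>"
      using x(1) p(2) unfolding cone_def by blast+
    show "\<exists>\<nu>. norm \<nu> = 1 \<and> (\<forall>\<tau>. 0 < \<tau> \<and> \<tau> \<le> \<tau>0 \<longrightarrow> ball (x - \<tau> *\<^sub>R \<nu>) (\<tau>/8) \<subseteq> \<Omega>)"
      using \<nu> cone_p \<tau>0(2)[OF p(1)] by force
  qed
qed

lemma min_ratio_powr_mult_powr:
  fixes d r s :: real
  assumes "0 < d" "0 < r"
  shows "(min (d/r) 1) powr s * d powr (-s) = (max d r) powr (-s)"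
proof (cases "d \<le> r")
  case True
  then show ?thesis
    using assms by (simp add: powr_divide powr_minus field_simps max_def)
next
  case False
  then have "min (d/r) 1 = 1" using assms by (simp add: field_simps)
  then show ?thesis using False by (simp add: max_def)
qed

lemma green_bound_weight_le:
  fixes r t dy s n :: real
  assumes r: "r > 0" and t: "t > 0" and dy: "dy > 0" and s: "s > 0"
  shows "r powr (2 * s - n) * (min (t/r) 1) powr s * (min (dy/r) 1) powr s * dy powr (-s)
         \<le> min (r powr (s - n)) (t powr s * r powr (-n))"
proof -
  have A: "(min (dy/r) 1) powr s * dy powr (-s) \<le> r powr (-s)"
    using r dy s by (simp add: min_ratio_powr_mult_powr powr_mono2')
  have B: "r powr (2 * s - n) * (min (t/r) 1) powr s * r powr (-s) = min (r powr (s - n)) (t powr s * r powr (-n))"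
  proof (cases "t \<le> r")
    case True
    then have m: "(min (t/r) 1) powr s = t powr s / r powr s" using r t by (simp add: powr_divide)
    have "r powr (2 * s - n) * (t powr s / r powr s) * r powr (-s) = t powr s * r powr (-n)"
    proof -
      have "r powr (2 * s - n) = r powr s * r powr s * r powr (-n)" using r by (simp add: powr_add[symmetric])
      then show ?thesis using r by (simp add: powr_minus field_simps)
    qed
    moreover have "t powr s * r powr (-n) \<le> r powr (s - n)"
    proof -
      have "t powr s \<le> r powr s" using True t s by (intro powr_mono2) auto
      then have "t powr s * r powr (-n) \<le> r powr s * r powr (-n)" by (intro mult_right_mono) auto
      also have "\<dots> = r powr (s - n)" using r by (simp add: powr_add[symmetric])
      finally show ?thesis .
    qed
    ultimately show ?thesis using m by simp
  next
    case False
    then have "min (t/r) 1 = 1" using r by simp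
    moreover have "r powr (2 * s - n) * r powr (-s) = r powr (s - n)" using r by (simp add: powr_add[symmetric])
    moreover have "r powr (s - n) \<le> t powr s * r powr (-n)"
    proof -
      have "r powr s \<le> t powr s" using False r s by (intro powr_mono2) auto
      then have "r powr s * r powr (-n) \<le> t powr s * r powr (-n)" by (intro mult_right_mono) auto
      moreover have "r powr s * r powr (-n) = r powr (s - n)" using r by (simp add: powr_add[symmetric])
      ultimately show ?thesis by simp
    qed
    ultimately show ?thesis by simp
  qed
  have "r powr (2 * s - n) * (min (t/r) 1) powr s * (min (dy/r) 1) powr s * dy powr (-s)
        = (r powr (2 * s - n) * (min (t/r) 1) powr s) * ((min (dy/r) 1) powr s * dy powr (-s))" by simp
  also have "\<dots> \<le> (r powr (2 * s - n) * (min (t/r) 1) powr s) * r powr (-s)"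
    using A by (intro mult_left_mono) auto
  also have "\<dots> = min (r powr (s - n)) (t powr s * r powr (-n))" using B by simp
  finally show ?thesis .
qed

lemma green_bound_weight_ge:
  fixes r t dy s n :: real
  assumes r: "r > 0" and t: "t > 0" and dy: "dy > 0" and s: "s > 0" and sn: "2 * s \<le> n"
    and dyle: "dy \<le> t + r"
  shows "r powr (2 * s - n) * (min (t/r) 1) powr s * (min (dy/r) 1) powr s * dy powr (-s)
         \<ge> 2 powr (-s) * t powr s * (max r t) powr (-n)"
proof -
  define m where "m = max r t"
  have m: "m > 0" "r \<le> m" "t \<le> m" "dy \<le> 2*m" using r t dyle by (auto simp: m_def)
  have A: "(min (dy/r) 1) powr s * dy powr (-s) \<ge> (2*m) powr (-s)"
    using r dy s m by (simp add: min_ratio_powr_mult_powr powr_mono2')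
  have B: "r powr (2 * s - n) * (min (t/r) 1) powr s \<ge> t powr s * m powr (s - n)"
  proof (cases "t \<le> r")
    case True
    then have mr: "m = r" using m_def by simp
    have "(min (t/r) 1) powr s = t powr s / r powr s" using True r t by (simp add: powr_divide)
    moreover have "r powr (2 * s - n) = r powr s * r powr (s - n)" using r by (simp add: powr_add[symmetric])
    ultimately show ?thesis using r mr by simp
  next
    case False
    then have mt: "m = t" using m_def by simp
    have "min (t/r) 1 = 1" using False r by simp
    moreover have "t powr (2 * s - n) \<le> r powr (2 * s - n)" using False r sn by (intro powr_mono2') auto
    moreover have "t powr (2 * s - n) = t powr s * t powr (s - n)" using t by (simp add: powr_add[symmetric])
    ultimately show ?thesis using mt by simp
  qed
  have "2 powr (-s) * t powr s * m powr (-n) = (t powr s * m powr (s - n)) * (2*m) powr (-s)"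
  proof -
    have "(2*m) powr (-s) = 2 powr (-s) * m powr (-s)" using m by (simp add: powr_mult)
    moreover have "m powr (s - n) * m powr (-s) = m powr (-n)" using m by (simp add: powr_add[symmetric])
    ultimately show ?thesis by (simp add: algebra_simps)
  qed
  also have "\<dots> \<le> (r powr (2 * s - n) * (min (t/r) 1) powr s) * ((min (dy/r) 1) powr s * dy powr (-s))"
    by (rule mult_mono[OF B A]) auto
  finally show ?thesis by (simp add: m_def mult.assoc)
qed

lemma green_weight_bounds:
  fixes \<Omega> :: "(real^'n) set" and G :: "real^'n \<Rightarrow> real^'n \<Rightarrow> real"
  assumes \<Omega>: "open \<Omega>" "bounded \<Omega>" and s: "0 < s" "2 * s \<le> real CARD('n)"
    and est: "\<exists>c1>0. \<exists>c2>0. \<forall>x\<in>\<Omega>. \<forall>y\<in>\<Omega>. x \<noteq> y \<longrightarrow>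
        (let r = dist x y;
             B = r powr (2 * s - real CARD('n)) * (min (bdist \<Omega> x / r) 1) powr s
                   * (min (bdist \<Omega> y / r) 1) powr s
         in c1 * B \<le> G x y \<and> G x y \<le> c2 * B)"
  obtains A C0 where "0 < A" "0 < C0"
    "\<And>x y. x \<in> \<Omega> \<Longrightarrow> y \<in> \<Omega> \<Longrightarrow> x \<noteq> y \<Longrightarrow> A * bdist \<Omega> x powr s
      * max (dist x y) (bdist \<Omega> x) powr (- real CARD('n)) \<le> G x y * bdist \<Omega> y powr (-s)"
    "\<And>x y. x \<in> \<Omega> \<Longrightarrow> y \<in> \<Omega> \<Longrightarrow> x \<noteq> y \<Longrightarrow> G x y * bdist \<Omega> y powr (-s)
      \<le> C0 * min (dist x y powr (s - real CARD('n))) (bdist \<Omega> x powr s * dist x y powr (- real CARD('n)))"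
proof -
  define B where "B = (\<lambda>x y. dist x y powr (2 * s - real CARD('n))
    * (min (bdist \<Omega> x / dist x y) 1) powr s * (min (bdist \<Omega> y / dist x y) 1) powr s)"
  obtain c1 c2 where c: "0 < c1" "0 < c2"
    and G: "\<forall>x\<in>\<Omega>. \<forall>y\<in>\<Omega>. x \<noteq> y \<longrightarrow> c1 * B x y \<le> G x y \<and> G x y \<le> c2 * B x y"
    using est unfolding B_def Let_def by blast
  show ?thesis
  proof (rule that[of "c1 * 2 powr (-s)" c2])
    fix x y assume xy: "x \<in> \<Omega>" "y \<in> \<Omega>" "x \<noteq> y"
    have r: "0 < dist x y" and \<delta>: "0 < bdist \<Omega> x" "0 < bdist \<Omega> y"
      using xy bdist_pos[OF \<Omega>] by auto
    have w: "0 \<le> bdist \<Omega> y powr (-s)" by simp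
    have "c1 * 2 powr (-s) * bdist \<Omega> x powr s * max (dist x y) (bdist \<Omega> x) powr (- real CARD('n))
        \<le> c1 * (B x y * bdist \<Omega> y powr (-s))"
      using green_bound_weight_ge[OF r \<delta> s bdist_le_bdist_add_dist] c(1)
      unfolding B_def by (simp add: mult.assoc mult_left_mono)
    also have "\<dots> \<le> G x y * bdist \<Omega> y powr (-s)"
      using mult_right_mono[OF _ w, of "c1 * B x y" "G x y"] G xy by (simp add: mult.assoc)
    finally show "c1 * 2 powr (-s) * bdist \<Omega> x powr s * max (dist x y) (bdist \<Omega> x) powr (- real CARD('n))
        \<le> G x y * bdist \<Omega> y powr (-s)" .
    have "G x y * bdist \<Omega> y powr (-s) \<le> c2 * (B x y * bdist \<Omega> y powr (-s))"
      using mult_right_mono[OF _ w, of "G x y" "c2 * B x y"] G xy by (simp add: mult.assoc)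
    also have "\<dots> \<le> c2 * min (dist x y powr (s - real CARD('n)))
        (bdist \<Omega> x powr s * dist x y powr (- real CARD('n)))"
      using green_bound_weight_le[OF r \<delta> s(1)] c(2) unfolding B_def by (intro mult_left_mono) auto
    finally show "G x y * bdist \<Omega> y powr (-s) \<le> c2 * min (dist x y powr (s - real CARD('n)))
        (bdist \<Omega> x powr s * dist x y powr (- real CARD('n)))" .
  qed (use c in simp_all)
qed

lemma frac_green_weight_measurable:
  assumes "frac_green s \<Omega> G" "x \<in> \<Omega>"
  shows "(\<lambda>y. G x y * bdist \<Omega> y powr (-s)) \<in> borel_measurable lborel"
proof -
  have "(\<lambda>y. bdist \<Omega> y) \<in> borel_measurable borel"
    unfolding bdist_def by (intro borel_measurable_continuous_onI continuous_on_infdist continuous_on_id)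
  then show ?thesis
    using assms unfolding frac_green_def measurable_lborel2
    by (intro borel_measurable_times powr_real_measurable) auto
qed

lemma dyadic_min_summable_suminf_le:
  fixes R t s :: real
  assumes R: "R > 0" and t: "t > 0" and s: "s > 0"
  shows "summable (\<lambda>k. min ((R / 2^(k+1)) powr s) (t powr s)) \<and>
     (\<Sum>k. min ((R / 2^(k+1)) powr s) (t powr s)) \<le> t powr s * (real (nat \<lceil>log 2 (R/t)\<rceil>) + 1/(1 - 2 powr (-s)))"
proof -
  define \<rho> where "\<rho> = (\<lambda>k::nat. R / 2^(k+1))"
  define b where "b = (\<lambda>k. min ((\<rho> k) powr s) (t powr s))"
  define K where "K = nat \<lceil>log 2 (R/t)\<rceil>"
  define q where "q = (2::real) powr (-s)"
  have "1 < (2::real) powr s" using s by (simp add: gr_one_powr)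
  moreover have qq: "q = 1 / 2 powr s" by (simp add: q_def powr_minus divide_inverse)
  ultimately have q: "0 < q" "q < 1" by auto
  have "R/t \<le> 2 powr (log 2 (R/t))" using R t by simp
  also have "\<dots> \<le> 2 powr (real K)"
    by (intro powr_mono) (auto simp: K_def real_nat_ceiling_ge)
  also have "\<dots> = 2^K" by (simp add: powr_realpow)
  finally have "R/t \<le> 2^K" .
  then have "R \<le> t * 2^K" using t by (simp add: field_simps)
  moreover have "t * 2^K \<le> t * (2 * 2^K)" using t by simp
  ultimately have "R \<le> t * (2 * 2^K)" by linarith
  then have rK: "\<rho> K \<le> t" using t by (simp add: \<rho>_def field_simps)
  have rpos: "\<rho> k > 0" for k using R by (simp add: \<rho>_def)
  have geo: "(\<rho> (K + j)) powr s \<le> t powr s * q^j" for j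
  proof (induction j)
    case 0 then show ?case using rK rpos[of K] s by (simp add: powr_mono2)
  next
    case (Suc j)
    have e1: "\<rho> (K + Suc j) = \<rho> (K + j) / 2" by (simp add: \<rho>_def)
    have "(\<rho> (K + Suc j)) powr s = (\<rho> (K + j)) powr s / 2 powr s"
      unfolding e1 by (rule powr_divide)
    also have "\<dots> = (\<rho> (K + j)) powr s * q" using qq by simp
    also have "\<dots> \<le> t powr s * q^j * q" using Suc q by (intro mult_right_mono) auto
    finally show ?case by (simp add: ac_simps)
  qed
  have bK: "b (j + K) \<le> t powr s * q^j" for j
    using geo[of j] by (simp add: b_def add.commute)
  have b0: "b k \<ge> 0" for k by (simp add: b_def)
  have sg: "summable (\<lambda>j. t powr s * q^j)" using q by (intro summable_mult summable_geometric) auto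
  have sK: "summable (\<lambda>j. b (j + K))"
    by (rule summable_comparison_test[of _ "\<lambda>j. t powr s * q^j"]) (use bK b0 sg in auto)
  then have sb: "summable b" by simp
  have "suminf b = (\<Sum>j. b (j + K)) + (\<Sum>i<K. b i)" by (rule suminf_split_initial_segment[OF sb])
  also have "(\<Sum>j. b (j + K)) \<le> (\<Sum>j. t powr s * q^j)" by (rule suminf_le[OF bK sK sg])
  also have "(\<Sum>j. t powr s * q^j) = t powr s * (1 / (1 - q))"
    using q by (simp add: suminf_mult suminf_geometric)
  also have "(\<Sum>i<K. b i) \<le> (\<Sum>i<K. t powr s)" by (intro sum_mono) (simp add: b_def)
  also have "(\<Sum>i<K. t powr s) = t powr s * real K" by simp
  finally have "suminf b \<le> t powr s * (real K + 1/(1-q))" by (simp add: algebra_simps)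
  then show ?thesis using sb unfolding b_def \<rho>_def K_def q_def by simp
qed

lemma nat_ceiling_log2_le_ln:
  fixes R t Q :: real
  assumes "0 < R" "0 < t" "0 \<le> Q"
  shows "real (nat \<lceil>log 2 (R/t)\<rceil>) + Q \<le> (\<bar>ln R\<bar> / ln 2 + 1 + Q + 1 / ln 2) * (1 + \<bar>ln t\<bar>)"
proof -
  have "real (nat \<lceil>log 2 (R/t)\<rceil>) \<le> \<bar>log 2 (R/t)\<bar> + 1"
    by (cases "\<lceil>log 2 (R/t)\<rceil> \<le> 0") (auto intro: order.trans[OF of_int_ceiling_le_add_one])
  also have "\<bar>log 2 (R/t)\<bar> \<le> \<bar>ln R\<bar> / ln 2 + \<bar>ln t\<bar> / ln 2"
    using assms by (simp add: log_def ln_div abs_divide add_divide_distrib[symmetric] divide_right_mono)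
  finally have "real (nat \<lceil>log 2 (R/t)\<rceil>) + Q \<le> (\<bar>ln R\<bar> / ln 2 + 1 + Q) + (1 / ln 2) * \<bar>ln t\<bar>"
    by simp
  also have "\<dots> \<le> (\<bar>ln R\<bar> / ln 2 + 1 + Q + 1 / ln 2) * (1 + \<bar>ln t\<bar>)"
  proof -
    have "a + b * L \<le> (a + b) * (1 + L)" if "0 \<le> a" "0 \<le> b" "0 \<le> L" for a b L :: real
      using that mult_nonneg_nonneg[of a L] by (simp add: algebra_simps)
    from this[of "\<bar>ln R\<bar> / ln 2 + 1 + Q" "1 / ln 2" "\<bar>ln t\<bar>"] show ?thesis
      using assms(3) by simp
  qed
  finally show ?thesis .
qed

lemma antimono_le_dyadic_suminf:
  fixes h :: "real \<Rightarrow> real"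
  assumes anti: "\<And>a b. 0 < a \<Longrightarrow> a \<le> b \<Longrightarrow> h b \<le> h a" and nonneg: "\<And>r. 0 \<le> h r"
    and r: "0 < r" "r < R"
  shows "ennreal (h r) \<le> (\<Sum>k. ennreal (h (R / 2^(k+1))) * indicator {..<R / 2^k} r)"
proof -
  have "\<exists>k. R / 2^(k+1) \<le> r"
  proof -
    obtain m where "R / r < 2^m" using real_arch_pow[of 2 "R/r"] by auto
    then have "R / 2^(m+1) \<le> r" using r by (simp add: field_simps)
    then show ?thesis by blast
  qed
  define k where "k = (LEAST k. R / 2^(k+1) \<le> r)"
  have k1: "R / 2^(k+1) \<le> r"
    unfolding k_def by (rule LeastI_ex) fact
  have k2: "r < R / 2^k"
  proof (cases k)
    case 0 then show ?thesis using r by simp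
  next
    case (Suc j)
    then have "\<not> R / 2^(j+1) \<le> r" using not_less_Least[of j "\<lambda>k. R / 2^(k+1) \<le> r"] k_def by auto
    then show ?thesis using Suc by simp
  qed
  have "ennreal (h r) \<le> ennreal (h (R / 2^(k+1))) * indicator {..<R / 2^k} r"
    using anti[OF _ k1] r k2 by (simp add: ennreal_leI)
  also have "\<dots> \<le> (\<Sum>k. ennreal (h (R / 2^(k+1))) * indicator {..<R / 2^k} r)"
    using sum_le_suminf[OF summableI, of "{k}"] by simp
  finally show ?thesis .
qed

lemma nn_integral_ball_antimono_le:
  fixes x :: "real^'n" and h :: "real \<Rightarrow> real"
  assumes anti: "\<And>a b. 0 < a \<Longrightarrow> a \<le> b \<Longrightarrow> h b \<le> h a" and nonneg: "\<And>r. 0 \<le> h r"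
    and R: "0 < R"
  shows "(\<integral>\<^sup>+y. ennreal (indicator (ball x R) y * h (dist x y)) \<partial>lborel)
    \<le> (\<Sum>k. ennreal (h (R / 2^(k+1)) * (unit_ball_vol (real CARD('n)) * (R / 2^k) ^ CARD('n))))"
proof -
  have "AE y in lborel. ennreal (indicator (ball x R) y * h (dist x y))
      \<le> (\<Sum>k. ennreal (h (R / 2^(k+1))) * indicator (ball x (R / 2^k)) y)"
    using AE_lborel_singleton[of x]
  proof eventually_elim
    case (elim y)
    show ?case
    proof (cases "y \<in> ball x R")
      case True
      then show ?thesis
        using antimono_le_dyadic_suminf[OF anti nonneg, where r="dist x y" and R=R] elim
        by (simp add: indicator_def)
    qed simp
  qed
  then have "(\<integral>\<^sup>+y. ennreal (indicator (ball x R) y * h (dist x y)) \<partial>lborel)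
      \<le> (\<integral>\<^sup>+y. (\<Sum>k. ennreal (h (R / 2^(k+1))) * indicator (ball x (R / 2^k)) y) \<partial>lborel)"
    by (rule nn_integral_mono_AE)
  also have "\<dots> = (\<Sum>k. ennreal (h (R / 2^(k+1))) * emeasure lborel (ball x (R / 2^k)))"
    by (subst nn_integral_suminf)
      (auto intro!: borel_measurable_times_ennreal borel_measurable_indicator simp: nn_integral_cmult_indicator)
  also have "\<dots> = (\<Sum>k. ennreal (h (R / 2^(k+1)) * (unit_ball_vol (real CARD('n)) * (R / 2^k) ^ CARD('n))))"
    using R nonneg by (simp add: emeasure_ball ennreal_mult)
  finally show ?thesis .
qed

lemma integral_le_of_nn_integral_le:
  fixes f :: "'a \<Rightarrow> real"
  assumes f: "f \<in> borel_measurable M" "AE x in M. 0 \<le> f x" and B: "0 \<le> B"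
    and le: "(\<integral>\<^sup>+x. ennreal (f x) \<partial>M) \<le> ennreal B"
  shows "integrable M f" "integral\<^sup>L M f \<le> B"
proof -
  show "integrable M f"
    using le by (intro integrableI_nonneg[OF f]) (simp add: le_less_trans)
  show "integral\<^sup>L M f \<le> B"
    unfolding integral_eq_nn_integral[OF f] by (rule enn2real_leI[OF B le])
qed

lemma kernel_ball_integral_le_log:
  fixes x :: "real^'n"
  assumes R: "0 < R" and s: "0 < s" "s \<le> real CARD('n)" and t: "0 < t"
  defines "k \<equiv> \<lambda>y. indicator (ball x R) y *
    min (dist x y powr (s - real CARD('n))) (t powr s * dist x y powr (- real CARD('n)))"
  shows "integrable lborel k"
    and "integral\<^sup>L lborel k \<le> unit_ball_vol (real CARD('n)) * 2 ^ CARD('n)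
      * (\<bar>ln R\<bar> / ln 2 + 1 + 1 / (1 - 2 powr (-s)) + 1 / ln 2) * t powr s * (1 + \<bar>ln t\<bar>)"
proof -
  define n where "n = real CARD('n)"
  define \<omega> where "\<omega> = unit_ball_vol (real CARD('n))"
  define h where "h r = min (r powr (s - n)) (t powr s * r powr (-n))" for r
  define g where "g = (\<lambda>j::nat. min ((R / 2^(j+1)) powr s) (t powr s))"
  define Q where "Q = 1 / (1 - 2 powr (-s))"
  have \<omega>: "0 < \<omega>" by (simp add: \<omega>_def)
  have h_anti: "h r' \<le> h r" if "0 < r" "r \<le> r'" for r r'
  proof -
    have "r' powr (s - n) \<le> r powr (s - n)" "r' powr (-n) \<le> r powr (-n)"
      using that s by (auto intro!: powr_mono2' simp: n_def)
    then show ?thesis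
      unfolding h_def by (intro min.mono mult_left_mono) auto
  qed
  have h_nonneg: "0 \<le> h r" for r by (simp add: h_def)
  have k_eq: "k = (\<lambda>y. indicator (ball x R) y * h (dist x y))"
    by (simp add: k_def h_def n_def)
  have dyadic_term: "h (R / 2^(j+1)) * (\<omega> * (R / 2^j) ^ CARD('n)) = \<omega> * 2 ^ CARD('n) * g j" for j
  proof -
    define \<rho> where "\<rho> = R / 2^(j+1)"
    have \<rho>: "0 < \<rho>" using R by (simp add: \<rho>_def)
    have "(R / 2^j) ^ CARD('n) = 2 ^ CARD('n) * \<rho> powr n"
      using \<rho> by (simp add: \<rho>_def n_def powr_realpow power_mult_distrib[symmetric])
    moreover have "h \<rho> * \<rho> powr n = g j"
      using \<rho> by (simp add: h_def g_def \<rho>_def min_mult_distrib_right mult.assoc powr_add[symmetric])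
    ultimately have "h \<rho> * (\<omega> * (R / 2^j) ^ CARD('n)) = \<omega> * 2 ^ CARD('n) * g j"
      by (simp add: ac_simps)
    then show ?thesis by (simp only: \<rho>_def)
  qed
  have g: "summable g" "suminf g \<le> t powr s * (real (nat \<lceil>log 2 (R/t)\<rceil>) + Q)"
    using dyadic_min_summable_suminf_le[OF R t s(1)] by (simp_all add: g_def Q_def)
  have "(\<integral>\<^sup>+y. ennreal (k y) \<partial>lborel) \<le> (\<Sum>j. ennreal (\<omega> * 2 ^ CARD('n) * g j))"
    using nn_integral_ball_antimono_le[where h=h and x=x, OF h_anti h_nonneg R]
    unfolding k_eq \<omega>_def[symmetric] dyadic_term .
  also have "\<dots> = ennreal (\<omega> * 2 ^ CARD('n) * suminf g)"
    using g \<omega> by (simp add: suminf_ennreal2 g_def suminf_mult summable_mult)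
  finally have nn: "(\<integral>\<^sup>+y. ennreal (k y) \<partial>lborel) \<le> ennreal (\<omega> * 2 ^ CARD('n) * suminf g)" .
  have "(\<lambda>y. dist x y) \<in> borel_measurable borel"
    by (intro borel_measurable_continuous_onI continuous_intros)
  then have k_meas: "k \<in> borel_measurable lborel"
    unfolding k_def measurable_lborel2
    by (intro borel_measurable_times borel_measurable_indicator borel_measurable_min
        powr_real_measurable) auto
  have k_nonneg: "AE y in lborel. 0 \<le> k y"
    by (simp add: k_def)
  have "0 \<le> \<omega> * 2 ^ CARD('n) * suminf g"
    using \<omega> g by (intro mult_nonneg_nonneg suminf_nonneg) (auto simp: g_def)
  note k = integral_le_of_nn_integral_le[OF k_meas k_nonneg this nn]
  show "integrable lborel k" by (fact k(1))
  have "integral\<^sup>L lborel k \<le> \<omega> * 2 ^ CARD('n) * suminf g" by (fact k(2))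
  also have "\<dots> \<le> \<omega> * 2 ^ CARD('n) * (t powr s * (real (nat \<lceil>log 2 (R/t)\<rceil>) + Q))"
    using g \<omega> by (intro mult_left_mono) auto
  also have "\<dots> \<le> \<omega> * 2 ^ CARD('n) * (t powr s * ((\<bar>ln R\<bar> / ln 2 + 1 + Q + 1 / ln 2) * (1 + \<bar>ln t\<bar>)))"
  proof -
    have "0 < 1 - 2 powr (-s)"
      using s by (simp add: powr_minus inverse_less_1_iff gr_one_powr)
    then show ?thesis
      using nat_ceiling_log2_le_ln[OF R t, of Q] \<omega> by (intro mult_left_mono) (auto simp: Q_def)
  qed
  finally show "integral\<^sup>L lborel k \<le> unit_ball_vol (real CARD('n)) * 2 ^ CARD('n)
      * (\<bar>ln R\<bar> / ln 2 + 1 + 1 / (1 - 2 powr (-s)) + 1 / ln 2) * t powr s * (1 + \<bar>ln t\<bar>)"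
    by (simp add: \<omega>_def Q_def ac_simps)
qed

lemma set_integral_weight_le_log:
  fixes \<Omega> :: "(real^'n) set" and F :: "real^'n \<Rightarrow> real^'n \<Rightarrow> real"
  assumes \<Omega>: "open \<Omega>" "bounded \<Omega>" and s: "0 < s" "s \<le> real CARD('n)" and C0: "0 < C0"
    and meas: "\<And>x. x \<in> \<Omega> \<Longrightarrow> F x \<in> borel_measurable lborel"
    and nonneg: "\<And>x y. x \<in> \<Omega> \<Longrightarrow> y \<in> \<Omega> \<Longrightarrow> x \<noteq> y \<Longrightarrow> 0 \<le> F x y"
    and upper: "\<And>x y. x \<in> \<Omega> \<Longrightarrow> y \<in> \<Omega> \<Longrightarrow> x \<noteq> y \<Longrightarrow> F x y \<le>
      C0 * min (dist x y powr (s - real CARD('n))) (bdist \<Omega> x powr s * dist x y powr (- real CARD('n)))"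
  obtains C where "0 < C" "\<And>x. x \<in> \<Omega> \<Longrightarrow> set_integrable lborel \<Omega> (F x)"
    "\<And>x. x \<in> \<Omega> \<Longrightarrow> (LINT y:\<Omega>|lborel. F x y) \<le> C * bdist \<Omega> x powr s * (1 + \<bar>ln (bdist \<Omega> x)\<bar>)"
proof -
  obtain R where R: "0 < R" "\<And>x y. x \<in> \<Omega> \<Longrightarrow> y \<in> \<Omega> \<Longrightarrow> dist x y < R"
    using bounded_bdist_diameter_bound[OF \<Omega>(2)] by metis
  define K where "K = unit_ball_vol (real CARD('n)) * 2 ^ CARD('n)
      * (\<bar>ln R\<bar> / ln 2 + 1 + 1 / (1 - 2 powr (-s)) + 1 / ln 2)"
  have "0 < 1 - 2 powr (-s)"
    using s by (simp add: powr_minus inverse_less_1_iff gr_one_powr)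
  then have K: "0 < K"
    unfolding K_def by (intro mult_pos_pos add_nonneg_pos) auto
  have bound: "set_integrable lborel \<Omega> (F x) \<and>
      (LINT y:\<Omega>|lborel. F x y) \<le> C0 * K * bdist \<Omega> x powr s * (1 + \<bar>ln (bdist \<Omega> x)\<bar>)"
    if x: "x \<in> \<Omega>" for x
  proof -
    define t where "t = bdist \<Omega> x"
    have t: "0 < t" using bdist_pos[OF \<Omega> x] by (simp add: t_def)
    define k where "k = (\<lambda>y. indicator (ball x R) y *
      min (dist x y powr (s - real CARD('n))) (t powr s * dist x y powr (- real CARD('n))))"
    have k: "integrable lborel k" "integral\<^sup>L lborel k \<le> K * t powr s * (1 + \<bar>ln t\<bar>)"
      using kernel_ball_integral_le_log[OF R(1) s t, of x] unfolding k_def K_def by auto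
    have dominated: "AE y in lborel. 0 \<le> indicator \<Omega> y * F x y \<and> indicator \<Omega> y * F x y \<le> C0 * k y"
      using AE_lborel_singleton[of x]
    proof eventually_elim
      case (elim y)
      show ?case
      proof (cases "y \<in> \<Omega>")
        case True
        then show ?thesis
          using nonneg[OF x True] upper[OF x True] R(2)[OF x True] elim by (auto simp: k_def t_def)
      qed (use C0 in \<open>simp add: k_def\<close>)
    qed
    have int: "integrable lborel (\<lambda>y. indicator \<Omega> y * F x y)"
    proof (rule Bochner_Integration.integrable_bound[OF integrable_mult_right[OF k(1)]])
      show "(\<lambda>y. indicator \<Omega> y * F x y) \<in> borel_measurable lborel"
        using meas[OF x] \<Omega>(1) by (intro borel_measurable_times) (auto simp: measurable_lborel2)
      show "AE y in lborel. norm (indicator \<Omega> y * F x y) \<le> norm (C0 * k y)"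
        using dominated by eventually_elim auto
    qed
    have "(LINT y:\<Omega>|lborel. F x y) \<le> integral\<^sup>L lborel (\<lambda>y. C0 * k y)"
      unfolding set_lebesgue_integral_def using dominated
      by (intro integral_mono_AE) (use int k(1) in \<open>auto elim: AE_mp\<close>)
    also have "\<dots> \<le> C0 * (K * t powr s * (1 + \<bar>ln t\<bar>))"
      using k(2) C0 by simp
    finally show ?thesis
      using int by (simp add: set_integrable_def t_def ac_simps)
  qed
  show ?thesis
    using that[of "C0 * K"] C0 K bound by simp
qed

lemma integral_ge_sum_disjoint:
  fixes f :: "'a \<Rightarrow> real" and S :: "nat \<Rightarrow> 'a set"
  assumes f: "integrable M f" and disj: "disjoint_family_on S {..<N}"
    and S: "\<And>j. j < N \<Longrightarrow> S j \<in> sets M" "\<And>j. j < N \<Longrightarrow> emeasure M (S j) < \<infinity>"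
    and bound: "AE y in M. 0 \<le> f y \<and> (\<forall>j<N. y \<in> S j \<longrightarrow> a j \<le> f y)"
  shows "(\<Sum>j<N. a j * measure M (S j)) \<le> integral\<^sup>L M f"
proof -
  have S_int: "integrable M (\<lambda>y. a j * indicator (S j) y)" if "j < N" for j
    using S that by (intro integrable_mult_right integrable_real_indicator) auto
  have "(\<Sum>j<N. a j * measure M (S j)) = integral\<^sup>L M (\<lambda>y. \<Sum>j<N. a j * indicator (S j) y)"
    using S_int S(1) by (subst Bochner_Integration.integral_sum) (auto intro!: sum.cong simp: sets.Int_space_eq2)
  also have "\<dots> \<le> integral\<^sup>L M f"
  proof (rule integral_mono_AE[OF _ f])
    show "integrable M (\<lambda>y. \<Sum>j<N. a j * indicator (S j) y)"
      using S_int by (intro Bochner_Integration.integrable_sum) auto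
    show "AE y in M. (\<Sum>j<N. a j * indicator (S j) y) \<le> f y"
      using bound
    proof eventually_elim
      case (elim y)
      show ?case
      proof (cases "\<exists>j<N. y \<in> S j")
        case True
        then obtain j where j: "j < N" "y \<in> S j" by blast
        have "y \<notin> S i" if "i \<in> {..<N} - {j}" for i
          using disj j that unfolding disjoint_family_on_def by blast
        then have "(\<Sum>i<N. a i * indicator (S i) y) = a j"
          using j by (subst sum.remove[of _ j]) (auto intro!: sum.neutral)
        then show ?thesis using elim j by simp
      next
        case False
        then show ?thesis using elim by (simp add: sum.neutral)
      qed
    qed
  qed
  finally show ?thesis .
qed

lemma cone_balls_disjoint:
  fixes x \<nu> :: "real^'n"
  assumes \<nu>: "norm \<nu> = 1" and \<tau>: "0 < \<tau>"
  shows "disjoint_family (\<lambda>k. ball (x - (\<tau> / 2^k) *\<^sub>R \<nu>) (\<tau> / 2^k / 8))"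
proof -
  have "ball (x - (\<tau> / 2^i) *\<^sub>R \<nu>) (\<tau> / 2^i / 8) \<inter> ball (x - (\<tau> / 2^j) *\<^sub>R \<nu>) (\<tau> / 2^j / 8) = {}"
    if "i < j" for i j :: nat
  proof -
    have "(2::real) ^ Suc i \<le> 2 ^ j" using that by (intro power_increasing) auto
    then have "\<tau> / 2^j \<le> \<tau> / 2^i / 2" using \<tau> by (simp add: field_simps)
    then show ?thesis
      using dist_cone_ball[OF \<nu>, of "\<tau> / 2^i" _ x] dist_cone_ball[OF \<nu>, of "\<tau> / 2^j" _ x] \<tau>
      by fastforce
  qed
  then show ?thesis
    unfolding disjoint_family_on_def by (metis Int_commute linorder_neqE_nat)
qed

lemma dyadic_scales_count_ge_log:
  fixes \<tau> t :: real
  assumes \<tau>: "0 < \<tau>" "\<tau> \<le> 1" and t: "0 < t" "t \<le> (\<tau>/2)^2"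
  obtains M :: nat where "\<And>k. k < M \<Longrightarrow> 2*t \<le> \<tau> / 2^k" "ln (1/t) / (2 * ln 2) \<le> real M"
proof
  define v where "v = log 2 (\<tau>/(2*t))"
  have "(\<tau>/2)^2 \<le> \<tau>/4" using \<tau> by (simp add: power2_eq_square field_simps mult_left_le_one_le)
  then have "1 < \<tau>/(2*t)" using t \<tau> by (simp add: field_simps)
  then have v: "0 < v" "2 powr v = \<tau>/(2*t)" unfolding v_def by simp_all
  show "2*t \<le> \<tau> / 2^k" if "k < nat \<lfloor>v\<rfloor> + 1" for k
  proof -
    have "real k \<le> v" using that v by linarith
    then have "2 ^ k \<le> \<tau>/(2*t)" using v(2) powr_mono[of k v 2] by (simp add: powr_realpow)
    then show ?thesis using t by (simp add: field_simps)
  qed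
  have "ln t \<le> 2 * ln (\<tau>/2)"
    using t \<tau> ln_le_cancel_iff[of t "(\<tau>/2)^2"] by (simp add: ln_realpow)
  moreover have "v = (ln (\<tau>/2) - ln t) / ln 2"
    unfolding v_def using \<tau> t by (simp add: log_def ln_div ln_mult field_simps)
  ultimately have "ln (1/t) / (2 * ln 2) \<le> v"
    using t by (simp add: ln_div field_simps)
  then show "ln (1/t) / (2 * ln 2) \<le> real (nat \<lfloor>v\<rfloor> + 1)"
    using v by linarith
qed

lemma cone_ball_mass:
  fixes c :: "real^'n"
  assumes "0 < \<sigma>"
  shows "(9 * \<sigma> / 8) powr (- real CARD('n)) * measure lborel (ball c (\<sigma> / 8))
    = unit_ball_vol (real CARD('n)) * 9 powr (- real CARD('n))"
proof -
  define n where "n = real CARD('n)"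
  have "(9 * \<sigma> / 8) powr (-n) = 9 powr (-n) * (\<sigma> / 8) powr (-n)"
    using assms powr_mult[of 9 "\<sigma> / 8" "-n"] by simp
  moreover have "(\<sigma> / 8) powr (-n) * (\<sigma> / 8) powr n = 1"
    using assms by (simp add: powr_add[symmetric])
  moreover have "measure lborel (ball c (\<sigma> / 8)) = unit_ball_vol n * (\<sigma> / 8) powr n"
    using assms by (simp add: content_ball n_def powr_realpow)
  ultimately show ?thesis
    unfolding n_def[symmetric] by (simp add: ac_simps)
qed

text \<open>The cone at \<open>x\<close> contains \<open>\<approx> log (1/t)\<close> disjoint balls of radius comparable to their
  distance from \<open>x\<close>, each carrying the same mass of the weight \<open>|x - y|^(-n)\<close>.\<close>

lemma integral_cone_ge_log:
  fixes f :: "real^'n \<Rightarrow> real" and x \<nu> :: "real^'n"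
  assumes f: "integrable lborel f" "AE y in lborel. 0 \<le> f y"
    and \<nu>: "norm \<nu> = 1" and \<tau>: "0 < \<tau>" "\<tau> \<le> 1" and t: "0 < t" "t \<le> (\<tau>/2)^2" and a: "0 \<le> a"
    and cone: "\<And>\<sigma>. 0 < \<sigma> \<Longrightarrow> \<sigma> \<le> \<tau> \<Longrightarrow> ball (x - \<sigma> *\<^sub>R \<nu>) (\<sigma>/8) \<subseteq> \<Omega>"
    and lower: "\<And>y. y \<in> \<Omega> \<Longrightarrow> y \<noteq> x \<Longrightarrow> a * max (dist x y) t powr (- real CARD('n)) \<le> f y"
  shows "a * unit_ball_vol (real CARD('n)) * 9 powr (- real CARD('n)) / (2 * ln 2) * \<bar>ln t\<bar>
    \<le> integral\<^sup>L lborel f"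
proof -
  define n where "n = real CARD('n)"
  define \<omega> where "\<omega> = unit_ball_vol n"
  define \<sigma> where "\<sigma> k = \<tau> / 2^k" for k :: nat
  define S where "S k = ball (x - \<sigma> k *\<^sub>R \<nu>) (\<sigma> k / 8)" for k
  define m where "m k = a * (9 * \<sigma> k / 8) powr (-n)" for k
  obtain M where M: "\<And>k. k < M \<Longrightarrow> 2*t \<le> \<tau> / 2^k" "ln (1/t) / (2 * ln 2) \<le> real M"
    using dyadic_scales_count_ge_log[OF \<tau> t] by blast
  have \<sigma>: "0 < \<sigma> k" "\<sigma> k \<le> \<tau>" for k
    using \<tau> by (auto simp: \<sigma>_def field_simps)
  have mass: "m k * measure lborel (S k) = a * \<omega> * 9 powr (-n)" for k
    using cone_ball_mass[OF \<sigma>(1)[of k], of "x - \<sigma> k *\<^sub>R \<nu>"]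
    by (simp add: m_def S_def \<omega>_def n_def mult.assoc)
  have "AE y in lborel. 0 \<le> f y \<and> (\<forall>k<M. y \<in> S k \<longrightarrow> m k \<le> f y)"
    using f(2)
  proof eventually_elim
    case (elim y)
    have "m k \<le> f y" if k: "k < M" and y: "y \<in> S k" for k
    proof -
      have d: "7 * \<sigma> k / 8 < dist x y" "dist x y < 9 * \<sigma> k / 8"
        using dist_cone_ball[OF \<nu> \<sigma>(1) y[unfolded S_def]] by auto
      have "y \<in> \<Omega>" using cone[OF \<sigma>(1)[of k] \<sigma>(2)[of k]] y unfolding S_def by blast
      moreover have "y \<noteq> x" "max (dist x y) t = dist x y"
        using M(1)[OF k] d t unfolding \<sigma>_def by auto
      ultimately have "a * dist x y powr (-n) \<le> f y" using lower[of y] by (simp add: n_def)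
      moreover have "(9 * \<sigma> k / 8) powr (-n) \<le> dist x y powr (-n)"
        using d \<sigma>(1)[of k] by (intro powr_mono2') (auto simp: n_def)
      ultimately show ?thesis using a unfolding m_def by (meson mult_left_mono order_trans)
    qed
    then show ?case using elim by blast
  qed
  moreover have "disjoint_family S"
    using cone_balls_disjoint[OF \<nu> \<tau>(1), of x] unfolding S_def \<sigma>_def .
  then have "disjoint_family_on S {..<M}"
    by (rule disjoint_family_on_mono[rotated]) simp
  ultimately have "(\<Sum>k<M. m k * measure lborel (S k)) \<le> integral\<^sup>L lborel f"
    using emeasure_lborel_ball_finite[of "x - \<sigma> _ *\<^sub>R \<nu>" "\<sigma> _ / 8"]
    by (intro integral_ge_sum_disjoint[OF f(1)]) (auto simp: S_def[abs_def])
  moreover have "a * \<omega> * 9 powr (-n) * (ln (1/t) / (2 * ln 2)) \<le> (\<Sum>k<M. m k * measure lborel (S k))"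
    unfolding mass using mult_left_mono[OF M(2), of "a * \<omega> * 9 powr (-n)"] a \<omega>_def
    by (simp add: mult.commute n_def)
  moreover have "ln (1/t) = \<bar>ln t\<bar>"
    using t \<tau> power_mono[of "\<tau>/2" "1/2" 2] by (simp add: ln_div power2_eq_square)
  ultimately show ?thesis by (simp add: \<omega>_def n_def)
qed

lemma integral_ball_weight_ge:
  fixes f :: "real^'n \<Rightarrow> real"
  assumes f: "integrable lborel f" "AE y in lborel. 0 \<le> f y" and t: "0 < t" "ball x t \<subseteq> \<Omega>"
    and lower: "\<And>y. y \<in> \<Omega> \<Longrightarrow> y \<noteq> x \<Longrightarrow> a * max (dist x y) t powr (- real CARD('n)) \<le> f y"
  shows "a * unit_ball_vol (real CARD('n)) \<le> integral\<^sup>L lborel f"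
proof -
  define n where "n = real CARD('n)"
  have "AE y in lborel. 0 \<le> f y \<and> (\<forall>k<1. y \<in> ball x t \<longrightarrow> a * t powr (-n) \<le> f y)"
    using f(2) AE_lborel_singleton[of x]
  proof eventually_elim
    case (elim y)
    have "a * t powr (-n) \<le> f y" if "y \<in> ball x t"
    proof -
      have "y \<in> \<Omega>" "max (dist x y) t = t" using that t by auto
      then show ?thesis using lower[of y] elim by (simp add: n_def)
    qed
    then show ?case using elim by blast
  qed
  then have "(\<Sum>k<1::nat. a * t powr (-n) * measure lborel (ball x t)) \<le> integral\<^sup>L lborel f"
    using emeasure_lborel_ball_finite[of x t]
    by (intro integral_ge_sum_disjoint[OF f(1), where S="\<lambda>_. ball x t"])
      (auto simp: disjoint_family_on_def)
  moreover have "t powr (-n) * measure lborel (ball x t) = unit_ball_vol n"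
    using t by (simp add: content_ball n_def powr_realpow[symmetric] mult.left_commute powr_add[symmetric])
  ultimately show ?thesis by (simp add: mult.assoc n_def)
qed

lemma log_lower_bound_from_near_and_uniform:
  fixes t t1 R B \<kappa> \<phi> s :: real
  assumes t: "0 < t" "t \<le> R" and t1: "0 < t1" and B: "0 \<le> B"
    and near: "t < t1 \<Longrightarrow> \<kappa> * t powr s * \<bar>ln t\<bar> \<le> \<phi>"
    and uniform: "B * t powr s \<le> \<phi>"
  shows "min \<kappa> (B / (\<bar>ln t1\<bar> + \<bar>ln R\<bar> + 1)) * t powr s * \<bar>ln t\<bar> \<le> \<phi>"
proof (cases "t < t1")
  case True
  then show ?thesis
    using near by (smt (verit) abs_ge_zero min.cobounded1 mult_right_mono powr_ge_zero)
next
  case False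
  define L where "L = \<bar>ln t1\<bar> + \<bar>ln R\<bar> + 1"
  have "ln t1 \<le> ln t" "ln t \<le> ln R"
    using False t t1 by simp_all
  then have L: "\<bar>ln t\<bar> \<le> L" "0 < L" by (auto simp: L_def)
  have "min \<kappa> (B / L) * t powr s * \<bar>ln t\<bar> \<le> (B / L) * \<bar>ln t\<bar> * t powr s"
    using mult_right_mono[OF min.cobounded2[of \<kappa> "B / L"], of "t powr s * \<bar>ln t\<bar>"]
    by (simp add: ac_simps)
  also have "\<dots> \<le> B * t powr s"
    using L B by (intro mult_right_mono) (auto simp: field_simps mult_left_mono)
  finally show ?thesis using uniform by (simp add: L_def)
qed

lemma set_integrable_nonneg_off_point:
  fixes g :: "real^'n \<Rightarrow> real"
  assumes "set_integrable lborel \<Omega> g" "\<forall>y\<in>\<Omega>. y \<noteq> x \<longrightarrow> 0 \<le> g y"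
  shows "integrable lborel (\<lambda>y. indicator \<Omega> y * g y)" "AE y in lborel. 0 \<le> indicator \<Omega> y * g y"
  using assms(1) AE_lborel_singleton[of x]
  by (auto simp: set_integrable_def indicator_def assms(2) elim!: AE_mp)

lemma set_integral_weight_ge_log:
  fixes \<Omega> :: "(real^'n) set" and F :: "real^'n \<Rightarrow> real^'n \<Rightarrow> real"
  assumes \<Omega>: "open \<Omega>" "bounded \<Omega>" "C2_boundary \<Omega>" and A: "0 < A"
    and int: "\<And>x. x \<in> \<Omega> \<Longrightarrow> set_integrable lborel \<Omega> (F x)"
    and lower: "\<And>x y. x \<in> \<Omega> \<Longrightarrow> y \<in> \<Omega> \<Longrightarrow> x \<noteq> y \<Longrightarrow>
      A * bdist \<Omega> x powr s * max (dist x y) (bdist \<Omega> x) powr (- real CARD('n)) \<le> F x y"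
  obtains c where "0 < c"
    "\<And>x. x \<in> \<Omega> \<Longrightarrow> c * bdist \<Omega> x powr s * \<bar>ln (bdist \<Omega> x)\<bar> \<le> (LINT y:\<Omega>|lborel. F x y)"
proof -
  define n where "n = real CARD('n)"
  define \<omega> where "\<omega> = unit_ball_vol n"
  obtain d0 \<tau>0 where d0: "0 < d0" and \<tau>0: "0 < \<tau>0" and cone: "\<And>x. x \<in> \<Omega> \<Longrightarrow> bdist \<Omega> x < d0 \<Longrightarrow>
      \<exists>\<nu>. norm \<nu> = 1 \<and> (\<forall>\<tau>. 0 < \<tau> \<and> \<tau> \<le> \<tau>0 \<longrightarrow> ball (x - \<tau> *\<^sub>R \<nu>) (\<tau>/8) \<subseteq> \<Omega>)"
    using C2_boundary_uniform_cone[OF \<Omega>] by blast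
  obtain R where R: "\<And>x. x \<in> \<Omega> \<Longrightarrow> bdist \<Omega> x \<le> R"
    using bounded_bdist_diameter_bound[OF \<Omega>(2)] by metis
  define \<tau>1 where "\<tau>1 = min \<tau>0 1"
  define t1 where "t1 = min d0 ((\<tau>1/2)^2)"
  have \<tau>1: "0 < \<tau>1" "\<tau>1 \<le> 1" using \<tau>0 by (auto simp: \<tau>1_def)
  then have t1: "0 < t1" "t1 < 1" "t1 \<le> (\<tau>1/2)^2"
    using d0 power_mono[of "\<tau>1/2" "1/2" 2] by (auto simp: t1_def power2_eq_square)
  define \<kappa> where "\<kappa> = A * \<omega> * 9 powr (-n) / (2 * ln 2)"
  have \<omega>: "0 < \<omega>" by (simp add: \<omega>_def n_def)
  show ?thesis
  proof (rule that)
    show "0 < min \<kappa> (A * \<omega> / (\<bar>ln t1\<bar> + \<bar>ln R\<bar> + 1))"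
      using A \<omega> by (simp add: \<kappa>_def add_nonneg_pos)
    fix x assume x: "x \<in> \<Omega>"
    define t where "t = bdist \<Omega> x"
    define f where "f = (\<lambda>y. indicator \<Omega> y * F x y)"
    have t: "0 < t" "t \<le> R" using bdist_pos[OF \<Omega>(1,2) x] R[OF x] by (simp_all add: t_def)
    have lower_f: "A * t powr s * max (dist x y) t powr (-n) \<le> f y" if "y \<in> \<Omega>" "y \<noteq> x" for y
      using lower[OF x that(1)] that by (simp add: f_def t_def n_def)
    have "\<forall>y\<in>\<Omega>. y \<noteq> x \<longrightarrow> 0 \<le> F x y"
      using lower_f A order.trans[OF _ lower[OF x]] by (simp add: f_def)
    from set_integrable_nonneg_off_point[OF int[OF x] this]
    have f: "integrable lborel f" "AE y in lborel. 0 \<le> f y" by (simp_all add: f_def)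
    have \<phi>: "(LINT y:\<Omega>|lborel. F x y) = integral\<^sup>L lborel f"
      by (simp add: set_lebesgue_integral_def f_def)
    have uniform: "A * \<omega> * t powr s \<le> integral\<^sup>L lborel f"
      using integral_ball_weight_ge[OF f t(1) ball_bdist_subset[of x \<Omega>, folded t_def] lower_f[unfolded n_def]]
      by (simp add: t_def \<omega>_def n_def ac_simps)
    have near: "\<kappa> * t powr s * \<bar>ln t\<bar> \<le> integral\<^sup>L lborel f" if "t < t1"
    proof -
      have "bdist \<Omega> x < d0" using that by (simp add: t_def t1_def)
      then obtain \<nu> where \<nu>: "norm \<nu> = 1"
        and cone0: "\<forall>\<sigma>. 0 < \<sigma> \<and> \<sigma> \<le> \<tau>0 \<longrightarrow> ball (x - \<sigma> *\<^sub>R \<nu>) (\<sigma>/8) \<subseteq> \<Omega>"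
        using cone[OF x] by blast
      have cone_x: "ball (x - \<sigma> *\<^sub>R \<nu>) (\<sigma>/8) \<subseteq> \<Omega>" if "0 < \<sigma>" "\<sigma> \<le> \<tau>1" for \<sigma>
        using cone0 that by (simp add: \<tau>1_def)
      have "t \<le> (\<tau>1/2)^2" using that t1 by simp
      from integral_cone_ge_log[OF f \<nu> \<tau>1 t(1) this _ cone_x lower_f[unfolded n_def]] A
      show ?thesis by (simp add: \<kappa>_def \<omega>_def n_def ac_simps)
    qed
    show "min \<kappa> (A * \<omega> / (\<bar>ln t1\<bar> + \<bar>ln R\<bar> + 1)) * bdist \<Omega> x powr s * \<bar>ln (bdist \<Omega> x)\<bar>
        \<le> (LINT y:\<Omega>|lborel. F x y)"
      using log_lower_bound_from_near_and_uniform[OF t t1(1) _ near uniform] A \<omega>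
      unfolding \<phi> t_def by simp
  qed
qed

theorem lemma3p8:
  fixes \<Omega> :: "(real^'n) set" and s :: real and G :: "real^'n \<Rightarrow> real^'n \<Rightarrow> real"
  assumes n2: "CARD('n) \<ge> 2"
    and s: "0 < s" "s < 1"
    and dom: "open \<Omega>" "connected \<Omega>" "bounded \<Omega>" "\<Omega> \<noteq> {}" "C2_boundary \<Omega>"
    and green: "frac_green s \<Omega> G"
    and est: "\<exists>c1>0. \<exists>c2>0. \<forall>x\<in>\<Omega>. \<forall>y\<in>\<Omega>. x \<noteq> y \<longrightarrow>
        (let r = dist x y;
             B = r powr (2 * s - real CARD('n)) * (min (bdist \<Omega> x / r) 1) powr s
                   * (min (bdist \<Omega> y / r) 1) powr s
         in c1 * B \<le> G x y \<and> G x y \<le> c2 * B)"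
  shows "\<exists>c>0. \<exists>C>0. \<forall>x\<in>\<Omega>.
      c * bdist \<Omega> x powr s * \<bar>ln (bdist \<Omega> x)\<bar> \<le> phi_delta s \<Omega> G x \<and>
      phi_delta s \<Omega> G x \<le> C * bdist \<Omega> x powr s * (1 + \<bar>ln (bdist \<Omega> x)\<bar>)"
proof -
  have s_le: "2 * s \<le> real CARD('n)" "s \<le> real CARD('n)" using s n2 by linarith+
  obtain A C0 where A: "0 < A" and C0: "0 < C0"
    and lower: "\<And>x y. x \<in> \<Omega> \<Longrightarrow> y \<in> \<Omega> \<Longrightarrow> x \<noteq> y \<Longrightarrow> A * bdist \<Omega> x powr s
      * max (dist x y) (bdist \<Omega> x) powr (- real CARD('n)) \<le> G x y * bdist \<Omega> y powr (-s)"
    and upper: "\<And>x y. x \<in> \<Omega> \<Longrightarrow> y \<in> \<Omega> \<Longrightarrow> x \<noteq> y \<Longrightarrow> G x y * bdist \<Omega> y powr (-s)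
      \<le> C0 * min (dist x y powr (s - real CARD('n))) (bdist \<Omega> x powr s * dist x y powr (- real CARD('n)))"
    by (rule green_weight_bounds[OF dom(1,3) s(1) s_le(1) est]) auto
  have nonneg: "0 \<le> G x y * bdist \<Omega> y powr (-s)" if "x \<in> \<Omega>" "y \<in> \<Omega>" "x \<noteq> y" for x y
    using lower[OF that] A by (smt (verit) mult_nonneg_nonneg powr_ge_zero)
  obtain C where C: "0 < C" and int: "\<And>x. x \<in> \<Omega> \<Longrightarrow> set_integrable lborel \<Omega> (\<lambda>y. G x y * bdist \<Omega> y powr (-s))"
    and phi_le: "\<And>x. x \<in> \<Omega> \<Longrightarrow> phi_delta s \<Omega> G x \<le> C * bdist \<Omega> x powr s * (1 + \<bar>ln (bdist \<Omega> x)\<bar>)"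
    unfolding phi_delta_def
    by (rule set_integral_weight_le_log[OF dom(1,3) s(1) s_le(2) C0
          frac_green_weight_measurable[OF green] nonneg upper]) auto
  obtain c where c: "0 < c"
    and phi_ge: "\<And>x. x \<in> \<Omega> \<Longrightarrow> c * bdist \<Omega> x powr s * \<bar>ln (bdist \<Omega> x)\<bar> \<le> phi_delta s \<Omega> G x"
    unfolding phi_delta_def by (rule set_integral_weight_ge_log[OF dom(1,3,5) A int lower]) auto
  show ?thesis
    using C c phi_le phi_ge by blast
qed

end
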